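(* For a multi-parameter family $\rho(\theta)=\sum_{k=1}^d p_k(\theta)|w_k(\theta)\rangle\langle w_k(\theta)|$ with a chosen smooth spectral decomposition as in the context, at every $\theta$ one has the matrix inequality $$H_{SLD}(\theta)\le C_L(\theta),$$ i.e. $v^TH_{SLD}(\theta)v\le v^TC_L(\theta)v$ for all $v\in\mathbb{R}^p$.
   Context: Let $\Theta\subseteq\mathbb{R}^p$ be open and $\rho(\theta)=\sum_{k=1}^d p_k(\theta)|w_k(\theta)\rangle\langle w_k(\theta)|$, where $p_k:\Theta\to[0,1]$ are smooth with $\sum_k p_k=1$ and $|w_1(\theta)\rangle,\dots,|w_d(\theta)\rangle$ is an orthonormal basis of $\mathbb{C}^d$ depending smoothly on $\theta$. Write $|w_k^{(l)}\rangle=\frac{\partial}{\partial\theta^l}|w_k(\theta)\rangle$. Convention: indices $i$ with $p_i(\theta)=0$ are omitted from sums containing $1/p_i$. The $C_L$ quantum information is the $p\times p$ matrix $$C_L(\theta)_{kl}=\sum_i\frac{1}{p_i}\frac{\partial p_i}{\partial\theta^k}\frac{\partial p_i}{\partial\theta^l}+4\,\Re\sum_{i<j}(p_i+p_j)\langle w_i^{(k)}|w_j\rangle\langle w_j|w_i^{(l)}\rangle.$$ The SLD quantum information matrix is $H_{SLD}(\theta)_{kl}=\Re\,\mathrm{tr}\{\rho(\theta)\lambda_k(\theta)\lambda_l(\theta)\}$, where $\lambda_k(\theta)$ is any Hermitian solution of $\frac{\partial\rho}{\partial\theta^k}=\frac12(\rho\lambda_k+\lambda_k\rho)$. For symmetric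 matrices, $A\le B$ means $B-A$ is positive semidefinite. *)

theory Defs
  imports "HOL-Analysis.Analysis"
begin

definition cinner :: "complex^'d \<Rightarrow> complex^'d \<Rightarrow> complex" where
  "cinner a b = (\<Sum>i\<in>UNIV. cnj (a $ i) * b $ i)"

definition partial :: "'p \<Rightarrow> (real^'p \<Rightarrow> 'b::real_normed_vector) \<Rightarrow> real^'p \<Rightarrow> 'b" where
  "partial l f \<theta> = vector_derivative (\<lambda>t. f (\<theta> + t *\<^sub>R axis l 1)) (at 0)"

fun iter_partial :: "'p list \<Rightarrow> (real^'p \<Rightarrow> 'b::real_normed_vector) \<Rightarrow> real^'p \<Rightarrow> 'b" where
  "iter_partial [] f = f"
| "iter_partial (l # ls) f = partial l (iter_partial ls f)"

definition smooth_on :: "(real^'p) set \<Rightarrow> (real^'p \<Rightarrow> 'b::real_normed_vector) \<Rightarrow> bool" where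
  "smooth_on S f \<longleftrightarrow> (\<forall>ls. continuous_on S (iter_partial ls f) \<and>
     (\<forall>l. \<forall>\<theta>\<in>S. (\<lambda>t. iter_partial ls f (\<theta> + t *\<^sub>R axis l 1)) differentiable (at 0)))"

definition hermitian :: "complex^'d^'d \<Rightarrow> bool" where
  "hermitian A \<longleftrightarrow> (\<forall>i j. A $ i $ j = cnj (A $ j $ i))"

definition ctrace :: "complex^'d^'d \<Rightarrow> complex" where
  "ctrace A = (\<Sum>i\<in>UNIV. A $ i $ i)"

definition rho :: "('d \<Rightarrow> real^'p \<Rightarrow> real) \<Rightarrow> ('d \<Rightarrow> real^'p \<Rightarrow> complex^'d)
                   \<Rightarrow> real^'p \<Rightarrow> complex^'d^'d" where
  "rho p w \<theta> = (\<chi> i j. \<Sum>k\<in>UNIV. complex_of_real (p k \<theta>) * (w k \<theta>) $ i * cnj ((w k \<theta>) $ j))"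

definition H_SLD :: "('d \<Rightarrow> real^'p \<Rightarrow> real) \<Rightarrow> ('d \<Rightarrow> real^'p \<Rightarrow> complex^'d)
                   \<Rightarrow> ('p \<Rightarrow> complex^'d^'d) \<Rightarrow> real^'p \<Rightarrow> real^'p^'p" where
  "H_SLD p w lam \<theta> = (\<chi> k l. Re (ctrace (rho p w \<theta> ** lam k ** lam l)))"

definition C_L :: "('d::{finite,linorder} \<Rightarrow> real^'p \<Rightarrow> real) \<Rightarrow> ('d::{finite,linorder} \<Rightarrow> real^'p \<Rightarrow> complex^'d::{finite,linorder})
                   \<Rightarrow> real^'p \<Rightarrow> real^'p^'p" where
  "C_L p w \<theta> = (\<chi> k l.
      (\<Sum>i\<in>{i. p i \<theta> \<noteq> 0}. (1 / p i \<theta>) * partial k (p i) \<theta> * partial l (p i) \<theta>)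
    + 4 * Re (\<Sum>(i,j)\<in>{(i,j). i < j}.
         complex_of_real (p i \<theta> + p j \<theta>) * cinner (partial k (w i) \<theta>) (w j \<theta>)
           * cinner (w j \<theta>) (partial l (w i) \<theta>)))"

end

theory Submission
  imports Defs
begin

text \<open>
  Fix a direction v and write every object in the eigenbasis W_i = w_i(theta) of rho(theta),
  with eigenvalues q_i = p_i(theta).  Put L_ij = sum_k v_k <W_i|lambda_k W_j>,
  A_ij = sum_k v_k <W_i|d_k W_j> and D_i = sum_k v_k d_k p_i.  Then:
  (1) v^T H_SLD v = Re sum_ij q_i L_ij L_ji = sum_ij (q_i + q_j)/2 |L_ij|^2, since L is Hermitian;
  (2) differentiating rho = sum_m q_m |W_m><W_m| and using that d_k W is anti-Hermitian in the
      basis W (orthonormality is preserved), the SLD equation becomes, entrywise,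
      (q_i + q_j)/2 L_ij = delta_ij D_i + (q_j - q_i) A_ij;
  (3) hence the diagonal terms equal D_i^2/q_i (or vanish if q_i = 0) and the off-diagonal terms
      are bounded by 2 (q_i + q_j)|A_ij|^2, because |q_j - q_i| <= q_i + q_j;
  (4) summing gives exactly v^T C_L v.
\<close>

section \<open>The sesquilinear product on complex^'d\<close>

lemma cinner_swap: "cinner b a = cnj (cinner a b)"
  by (simp add: cinner_def mult.commute)

lemma cinner_scale_l: "cinner (c *s u) z = cnj c * cinner u z"
  by (simp add: cinner_def sum_distrib_left algebra_simps)

lemma cinner_scale_r: "cinner u (c *s z) = c * cinner u z"
  by (simp add: cinner_def sum_distrib_left algebra_simps)

lemma cinner_scaleR_r: "cinner u (r *\<^sub>R z) = of_real r * cinner u z"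
  unfolding cinner_def vector_scaleR_component
  by (simp add: sum_distrib_left scaleR_conv_of_real algebra_simps)

lemma cinner_add_r: "cinner u (x + y) = cinner u x + cinner u y"
  by (simp add: cinner_def sum.distrib algebra_simps)

lemma cinner_matrix_vector:
  "cinner u (A *v y) = (\<Sum>c\<in>UNIV. (\<Sum>a\<in>UNIV. cnj (u $ a) * A $ a $ c) * y $ c)"
proof -
  have "cinner u (A *v y) = (\<Sum>a\<in>UNIV. \<Sum>c\<in>UNIV. cnj (u $ a) * A $ a $ c * y $ c)"
    by (simp add: cinner_def matrix_vector_mult_def sum_distrib_left mult.assoc)
  also have "\<dots> = (\<Sum>c\<in>UNIV. \<Sum>a\<in>UNIV. cnj (u $ a) * A $ a $ c * y $ c)"
    by (rule sum.swap)
  finally show ?thesis by (simp add: sum_distrib_right)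
qed

lemma cinner_hermitian:
  assumes "hermitian A"
  shows "cinner u (A *v z) = cinner (A *v u) z"
proof -
  have "cinner u (A *v z) = (\<Sum>b\<in>UNIV. \<Sum>a\<in>UNIV. cnj (u $ a) * A $ a $ b * z $ b)"
    by (simp add: cinner_matrix_vector sum_distrib_right)
  also have "\<dots> = (\<Sum>b\<in>UNIV. \<Sum>a\<in>UNIV. cnj (A $ b $ a * u $ a) * z $ b)"
    using assms unfolding hermitian_def
    by (intro sum.cong refl) (metis complex_cnj_cnj complex_cnj_mult mult.commute)
  also have "\<dots> = cinner (A *v u) z"
    by (simp add: cinner_def matrix_vector_mult_def sum_distrib_right)
  finally show ?thesis .
qed

lemma cinner_hermitian_conj:
  assumes "hermitian M"
  shows "cinner y (M *v x) = cnj (cinner x (M *v y))"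
proof -
  have "cinner x (M *v y) = cinner (M *v x) y"
    by (rule cinner_hermitian[OF assms])
  then show ?thesis
    by (simp only: cinner_swap[of y "M *v x"])
qed

section \<open>Orthonormal bases\<close>

definition orthonormal_basis :: "('d::finite \<Rightarrow> complex^'d) \<Rightarrow> bool" where
  "orthonormal_basis W \<longleftrightarrow> (\<forall>i j. cinner (W i) (W j) = (if i = j then 1 else 0))"

text \<open>Completeness: d orthonormal vectors in complex^d satisfy sum_j |W_j><W_j| = 1, because the
  matrix with columns W_j is unitary once its adjoint is a left inverse.\<close>
lemma orthonormal_basis_complete:
  fixes W :: "'d::finite \<Rightarrow> complex^'d"
  assumes "orthonormal_basis W"
  shows "(\<Sum>j\<in>UNIV. W j $ c * cnj (W j $ d)) = (if c = d then 1 else 0)"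
proof -
  define U :: "complex^'d^'d" where "U = (\<chi> a m. W m $ a)"
  define U_adj :: "complex^'d^'d" where "U_adj = (\<chi> m a. cnj (W m $ a))"
  have "U_adj ** U = mat 1"
    using assms by (simp add: orthonormal_basis_def U_def U_adj_def matrix_matrix_mult_def
        mat_def vec_eq_iff cinner_def)
  then have "U ** U_adj = mat 1"
    using matrix_left_right_inverse by blast
  then have "(U ** U_adj) $ c $ d = mat 1 $ c $ d"
    by simp
  then show ?thesis
    by (simp add: U_def U_adj_def matrix_matrix_mult_def mat_def)
qed

lemma orthonormal_basis_insert:
  fixes W :: "'d::finite \<Rightarrow> complex^'d"
  assumes ON: "orthonormal_basis W"
  shows "cinner u (A *v y) = (\<Sum>j\<in>UNIV. cinner u (A *v W j) * cinner (W j) y)"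
proof -
  define r where "r c = (\<Sum>a\<in>UNIV. cnj (u $ a) * A $ a $ c)" for c
  have "(\<Sum>j\<in>UNIV. cinner u (A *v W j) * cinner (W j) y)
      = (\<Sum>j\<in>UNIV. (\<Sum>c\<in>UNIV. r c * W j $ c) * (\<Sum>d\<in>UNIV. cnj (W j $ d) * y $ d))"
    unfolding cinner_matrix_vector[of u A] by (simp add: r_def cinner_def)
  also have "\<dots> = (\<Sum>j\<in>UNIV. \<Sum>c\<in>UNIV. \<Sum>d\<in>UNIV. r c * y $ d * (W j $ c * cnj (W j $ d)))"
    by (simp add: sum_product algebra_simps)
  also have "\<dots> = (\<Sum>c\<in>UNIV. \<Sum>d\<in>UNIV. \<Sum>j\<in>UNIV. r c * y $ d * (W j $ c * cnj (W j $ d)))"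
    by (subst sum.swap) (intro sum.cong refl sum.swap)
  also have "\<dots> = (\<Sum>c\<in>UNIV. r c * y $ c)"
    by (simp add: sum_distrib_left[symmetric] orthonormal_basis_complete[OF ON]
        if_distrib cong: if_cong)
  also have "\<dots> = cinner u (A *v y)"
    by (simp add: cinner_matrix_vector r_def)
  finally show ?thesis ..
qed

section \<open>Spectral operators\<close>

definition spectral_op :: "('d::finite \<Rightarrow> real) \<Rightarrow> ('d \<Rightarrow> complex^'d) \<Rightarrow> complex^'d^'d" where
  "spectral_op q W = (\<chi> i j. \<Sum>k\<in>UNIV. complex_of_real (q k) * W k $ i * cnj (W k $ j))"

lemma rho_spectral_op: "rho p w \<theta> = spectral_op (\<lambda>m. p m \<theta>) (\<lambda>m. w m \<theta>)"
  by (simp add: rho_def spectral_op_def)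

lemma spectral_op_hermitian: "hermitian (spectral_op q W)"
  unfolding hermitian_def spectral_op_def by (simp add: mult.commute mult.left_commute)

lemma cinner_outer_sum:
  "cinner u ((\<chi> a b. \<Sum>m\<in>UNIV. c m * x m $ a * cnj (y m $ b)) *v z)
    = (\<Sum>m\<in>UNIV. c m * cinner u (x m) * cinner (y m) z)"
proof -
  have "cinner u ((\<chi> a b. \<Sum>m\<in>UNIV. c m * x m $ a * cnj (y m $ b)) *v z)
     = (\<Sum>a\<in>UNIV. \<Sum>b\<in>UNIV. \<Sum>m\<in>UNIV. c m * (cnj (u $ a) * x m $ a) * (cnj (y m $ b) * z $ b))"
    by (simp add: cinner_def matrix_vector_mult_def sum_distrib_left sum_distrib_right
        mult.commute mult.left_commute)
  also have "\<dots> = (\<Sum>m\<in>UNIV. \<Sum>a\<in>UNIV. \<Sum>b\<in>UNIV. c m * (cnj (u $ a) * x m $ a) * (cnj (y m $ b) * z $ b))"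
    by (subst sum.swap) (intro sum.cong refl sum.swap)
  also have "\<dots> = (\<Sum>m\<in>UNIV. c m * cinner u (x m) * cinner (y m) z)"
    by (simp add: cinner_def sum_distrib_left sum_distrib_right mult.assoc)
      (rule sum.cong[OF refl], rule sum.swap)
  finally show ?thesis .
qed

lemma spectral_op_eigenvector:
  assumes "orthonormal_basis W"
  shows "spectral_op q W *v W j = of_real (q j) *s W j"
proof -
  have "(spectral_op q W *v W j) $ a = of_real (q j) * W j $ a" for a
  proof -
    have "(spectral_op q W *v W j) $ a
        = (\<Sum>k\<in>UNIV. of_real (q k) * W k $ a * cinner (W k) (W j))"
      by (simp add: spectral_op_def matrix_vector_mult_def cinner_def sum_distrib_left
          sum_distrib_right mult.assoc) (rule sum.swap)
    then show ?thesis
      using assms unfolding orthonormal_basis_def by (simp add: if_distrib cong: if_cong)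
  qed
  then show ?thesis by (simp add: vec_eq_iff)
qed

lemma ctrace_spectral_op:
  "ctrace (spectral_op q W ** M) = (\<Sum>m\<in>UNIV. of_real (q m) * cinner (W m) (M *v W m))"
proof -
  have "ctrace (spectral_op q W ** M)
      = (\<Sum>a\<in>UNIV. \<Sum>c\<in>UNIV. \<Sum>m\<in>UNIV. of_real (q m) * (cnj (W m $ c) * (M $ c $ a * W m $ a)))"
    by (simp add: ctrace_def spectral_op_def matrix_matrix_mult_def sum_distrib_left
        sum_distrib_right mult.commute mult.left_commute)
  also have "\<dots> = (\<Sum>m\<in>UNIV. \<Sum>c\<in>UNIV. \<Sum>a\<in>UNIV. of_real (q m) * (cnj (W m $ c) * (M $ c $ a * W m $ a)))"
    by (subst sum.swap, subst sum.swap) (intro sum.cong refl sum.swap)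
  also have "\<dots> = (\<Sum>m\<in>UNIV. of_real (q m) * cinner (W m) (M *v W m))"
    by (simp add: cinner_def matrix_vector_mult_def sum_distrib_left)
  finally show ?thesis .
qed

lemma ctrace_spectral_op_product:
  fixes W :: "'d::finite \<Rightarrow> complex^'d"
  assumes ON: "orthonormal_basis W"
  shows "ctrace (spectral_op q W ** A ** B)
    = (\<Sum>i\<in>UNIV. \<Sum>j\<in>UNIV. of_real (q i) * (cinner (W i) (A *v W j) * cinner (W j) (B *v W i)))"
proof -
  have "ctrace (spectral_op q W ** A ** B)
      = (\<Sum>i\<in>UNIV. of_real (q i) * cinner (W i) (A *v (B *v W i)))"
    by (simp add: matrix_mul_assoc[symmetric] ctrace_spectral_op matrix_vector_mul_assoc)
  also have "\<dots> = (\<Sum>i\<in>UNIV. \<Sum>j\<in>UNIV. of_real (q i) * (cinner (W i) (A *v W j) * cinner (W j) (B *v W i)))"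
    by (intro sum.cong refl, subst orthonormal_basis_insert[OF ON, of _ A "B *v _"])
      (simp add: sum_distrib_left)
  finally show ?thesis .
qed

lemma cinner_symmetrised_product:
  fixes W :: "'d::finite \<Rightarrow> complex^'d"
  assumes ON: "orthonormal_basis W"
  shows "cinner (W i) (((1/2) *\<^sub>R (spectral_op q W ** L + L ** spectral_op q W)) *v W j)
     = of_real ((q i + q j) / 2) * cinner (W i) (L *v W j)"
proof -
  have left: "cinner (W i) ((spectral_op q W ** L) *v W j) = of_real (q i) * cinner (W i) (L *v W j)"
    by (simp add: matrix_vector_mul_assoc[symmetric] cinner_hermitian[OF spectral_op_hermitian]
        spectral_op_eigenvector[OF ON] cinner_scale_l)
  have right: "cinner (W i) ((L ** spectral_op q W) *v W j) = of_real (q j) * cinner (W i) (L *v W j)"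
    by (simp add: matrix_vector_mul_assoc[symmetric] spectral_op_eigenvector[OF ON]
        cinner_scale_r vec.scale)
  have "((1/2) *\<^sub>R X) *v z = (1/2) *\<^sub>R (X *v z)" for X :: "complex^'d^'d" and z
    by (simp add: vec_eq_iff matrix_vector_mult_def scaleR_sum_right)
  then show ?thesis
    by (simp add: matrix_vector_mult_add_rdistrib cinner_scaleR_r cinner_add_r left right
        algebra_simps)
qed

section \<open>Curves of vectors and operators\<close>

lemma bounded_linear_axis: "bounded_linear (axis i :: 'a::real_normed_vector \<Rightarrow> 'a^'n)"
proof (rule bounded_linear_intro[where K=1])
  fix x y :: 'a and r :: real
  show "axis i (x + y) = (axis i x + axis i y :: 'a^'n)"
    by (simp add: vec_eq_iff axis_def)
  show "axis i (r *\<^sub>R x) = (r *\<^sub>R axis i x :: 'a^'n)"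
    by (simp add: vec_eq_iff axis_def)
  have "norm (axis i x :: 'a^'n) \<le> (\<Sum>j\<in>UNIV. norm ((axis i x :: 'a^'n) $ j))"
    unfolding norm_vec_def by (rule L2_set_le_sum) simp
  also have "\<dots> = norm x"
    by (simp add: axis_def if_distrib cong: if_cong)
  finally show "norm (axis i x :: 'a^'n) \<le> norm x * 1"
    by simp
qed

lemma has_vector_derivative_componentwise:
  fixes f :: "real \<Rightarrow> 'a::real_normed_vector^'n"
  assumes "\<And>i. ((\<lambda>t. f t $ i) has_vector_derivative f' $ i) F"
  shows "(f has_vector_derivative f') F"
proof -
  have expand: "\<And>x::'a^'n. x = (\<Sum>i\<in>UNIV. axis i (x $ i))"
    by (simp add: vec_eq_iff sum_component axis_def)
  have "((\<lambda>t. \<Sum>i\<in>UNIV. axis i (f t $ i)) has_vector_derivative (\<Sum>i\<in>UNIV. axis i (f' $ i))) F"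
    by (intro has_vector_derivative_sum
        bounded_linear.has_vector_derivative[OF bounded_linear_axis] assms)
  then show ?thesis
    using expand[symmetric] by simp
qed

lemma cinner_has_vector_derivative:
  assumes "(f has_vector_derivative f') (at x)" "(g has_vector_derivative g') (at x)"
  shows "((\<lambda>t. cinner (f t) (g t)) has_vector_derivative (cinner (f x) g' + cinner f' (g x))) (at x)"
proof -
  have "((\<lambda>t. \<Sum>i\<in>UNIV. cnj (f t $ i) * g t $ i) has_vector_derivative
     (\<Sum>i\<in>UNIV. cnj (f x $ i) * g' $ i + cnj (f' $ i) * g x $ i)) (at x)"
    by (intro has_vector_derivative_sum has_vector_derivative_mult
        bounded_linear.has_vector_derivative[OF bounded_linear_cnj]
        bounded_linear.has_vector_derivative[OF bounded_linear_vec_nth] assms)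
  then show ?thesis
    by (simp add: cinner_def sum.distrib)
qed

lemma spectral_op_has_vector_derivative:
  fixes P :: "'d::finite \<Rightarrow> real \<Rightarrow> real" and V :: "'d \<Rightarrow> real \<Rightarrow> complex^'d"
  assumes hP: "\<And>m. (P m has_vector_derivative dP m) (at 0)"
    and hV: "\<And>m. (V m has_vector_derivative dV m) (at 0)"
  shows "((\<lambda>t. spectral_op (\<lambda>m. P m t) (\<lambda>m. V m t)) has_vector_derivative
     ((\<chi> a b. \<Sum>m\<in>UNIV. of_real (dP m) * V m 0 $ a * cnj (V m 0 $ b))
    + (\<chi> a b. \<Sum>m\<in>UNIV. of_real (P m 0) * dV m $ a * cnj (V m 0 $ b))
    + (\<chi> a b. \<Sum>m\<in>UNIV. of_real (P m 0) * V m 0 $ a * cnj (dV m $ b)))) (at 0)"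
proof (intro has_vector_derivative_componentwise)
  fix a b
  have hP': "((\<lambda>t. complex_of_real (P m t)) has_vector_derivative of_real (dP m)) (at 0)" for m
    using hP[of m]
    by (intro has_vector_derivative_of_real) (simp add: has_real_derivative_iff_has_vector_derivative)
  have hV': "((\<lambda>t. V m t $ c) has_vector_derivative dV m $ c) (at 0)" for m c
    by (rule bounded_linear.has_vector_derivative[OF bounded_linear_vec_nth hV])
  have hV'': "((\<lambda>t. cnj (V m t $ c)) has_vector_derivative cnj (dV m $ c)) (at 0)" for m c
    by (rule bounded_linear.has_vector_derivative[OF bounded_linear_cnj hV'])
  have "((\<lambda>t. \<Sum>m\<in>UNIV. complex_of_real (P m t) * V m t $ a * cnj (V m t $ b)) has_vector_derivative
     (\<Sum>m\<in>UNIV. complex_of_real (P m 0) * V m 0 $ a * cnj (dV m $ b) +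
        (complex_of_real (P m 0) * dV m $ a + of_real (dP m) * V m 0 $ a) * cnj (V m 0 $ b))) (at 0)"
    by (intro has_vector_derivative_sum has_vector_derivative_mult hP' hV' hV'')
  then show "((\<lambda>t. spectral_op (\<lambda>m. P m t) (\<lambda>m. V m t) $ a $ b) has_vector_derivative
     ((\<chi> a b. \<Sum>m\<in>UNIV. of_real (dP m) * V m 0 $ a * cnj (V m 0 $ b))
    + (\<chi> a b. \<Sum>m\<in>UNIV. of_real (P m 0) * dV m $ a * cnj (V m 0 $ b))
    + (\<chi> a b. \<Sum>m\<in>UNIV. of_real (P m 0) * V m 0 $ a * cnj (dV m $ b))) $ a $ b) (at 0)"
    by (simp add: spectral_op_def sum.distrib[symmetric] algebra_simps)
qed

lemma has_vector_derivative_locally_constant: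
  assumes "(g has_vector_derivative D) (at 0)" "open T" "(0::real) \<in> T"
    and "\<And>t. t \<in> T \<Longrightarrow> g t = c"
  shows "D = 0"
proof -
  have "((\<lambda>t. c) has_vector_derivative D) (at 0)"
    by (rule has_vector_derivative_transform_within_open[OF assms(1,2,3)]) (use assms(4) in simp)
  then show ?thesis
    using has_vector_derivative_const vector_derivative_unique_at by blast
qed

lemma orthonormal_curve_derivative:
  fixes V :: "'d::finite \<Rightarrow> real \<Rightarrow> complex^'d"
  assumes hV: "\<And>m. (V m has_vector_derivative dV m) (at 0)"
    and T: "open T" "0 \<in> T" and ON: "\<And>t. t \<in> T \<Longrightarrow> orthonormal_basis (\<lambda>m. V m t)"
  shows "cinner (V i 0) (dV j) = - cnj (cinner (V j 0) (dV i))"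
proof -
  have "cinner (V i 0) (dV j) + cinner (dV i) (V j 0) = 0"
    by (rule has_vector_derivative_locally_constant[OF cinner_has_vector_derivative[OF hV hV] T])
      (use ON in \<open>simp add: orthonormal_basis_def\<close>)
  then show ?thesis
    by (simp add: cinner_swap[of "dV i"] eq_neg_iff_add_eq_0)
qed

lemma spectral_op_derivative_entries:
  fixes V :: "'d::finite \<Rightarrow> real \<Rightarrow> complex^'d"
  assumes hP: "\<And>m. (P m has_vector_derivative dP m) (at 0)"
    and hV: "\<And>m. (V m has_vector_derivative dV m) (at 0)"
    and T: "open T" "0 \<in> T" and ON: "\<And>t. t \<in> T \<Longrightarrow> orthonormal_basis (\<lambda>m. V m t)"
  shows "cinner (V i 0) (vector_derivative (\<lambda>t. spectral_op (\<lambda>m. P m t) (\<lambda>m. V m t)) (at 0) *v V j 0)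
    = (if i = j then of_real (dP i) else 0) + of_real (P j 0 - P i 0) * cinner (V i 0) (dV j)"
proof -
  have ON0: "cinner (V a 0) (V b 0) = (if a = b then 1 else 0)" for a b
    using ON[OF T(2)] by (simp add: orthonormal_basis_def)
  have "cinner (V i 0) (vector_derivative (\<lambda>t. spectral_op (\<lambda>m. P m t) (\<lambda>m. V m t)) (at 0) *v V j 0)
      = (if i = j then of_real (dP i) else 0) + of_real (P j 0) * cinner (V i 0) (dV j)
        + of_real (P i 0) * cinner (dV i) (V j 0)"
    unfolding vector_derivative_at[OF spectral_op_has_vector_derivative[OF hP hV]]
      matrix_vector_mult_add_rdistrib cinner_add_r cinner_outer_sum
    by (simp add: ON0 if_distrib[where f="\<lambda>x. _ * x"] if_distrib[where f="\<lambda>x. x * _"]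
        cong: if_cong)
  also have "cinner (dV i) (V j 0) = - cinner (V i 0) (dV j)"
    by (simp add: cinner_swap[of "dV i"] orthonormal_curve_derivative[OF hV T ON, of j i])
  finally show ?thesis
    by (simp add: algebra_simps)
qed

lemma smooth_on_line_derivative:
  assumes "smooth_on S f" "\<theta> \<in> S"
  shows "((\<lambda>t. f (\<theta> + t *\<^sub>R axis k 1)) has_vector_derivative partial k f \<theta>) (at 0)"
proof -
  have "(\<lambda>t. iter_partial [] f (\<theta> + t *\<^sub>R axis k 1)) differentiable (at 0)"
    using assms unfolding smooth_on_def by blast
  then show ?thesis
    unfolding partial_def by (simp add: vector_derivative_works)
qed

lemma orthonormal_along_line:
  fixes \<theta> e :: "'a::real_normed_vector"
  assumes "open \<Theta>" "\<theta> \<in> \<Theta>" "\<And>\<theta>'. \<theta>' \<in> \<Theta> \<Longrightarrow> orthonormal_basis (\<lambda>m. w m \<theta>')"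
  shows "\<exists>T. open T \<and> (0::real) \<in> T \<and> (\<forall>t\<in>T. orthonormal_basis (\<lambda>m. w m (\<theta> + t *\<^sub>R e)))"
proof (intro exI conjI)
  show "open ((\<lambda>t::real. \<theta> + t *\<^sub>R e) -` \<Theta>)"
    by (rule continuous_open_vimage[OF assms(1)]) (intro continuous_intros)
qed (use assms in auto)

section \<open>The SLD equation in the eigenbasis of rho\<close>

lemma partial_eigenbasis_antihermitian:
  assumes "open \<Theta>" "\<theta> \<in> \<Theta>" "\<And>m. smooth_on \<Theta> (w m)"
    and ON: "\<And>\<theta>'. \<theta>' \<in> \<Theta> \<Longrightarrow> orthonormal_basis (\<lambda>m. w m \<theta>')"
  shows "cinner (w i \<theta>) (partial k (w j) \<theta>) = - cnj (cinner (w j \<theta>) (partial k (w i) \<theta>))"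
proof -
  obtain T where T: "open T" "0 \<in> T"
    and ON_T: "\<And>t. t \<in> T \<Longrightarrow> orthonormal_basis (\<lambda>m. w m (\<theta> + t *\<^sub>R axis k 1))"
    using orthonormal_along_line[where w=w and e="axis k 1", OF assms(1,2) ON] by auto
  have hw: "((\<lambda>t. w m (\<theta> + t *\<^sub>R axis k 1)) has_vector_derivative partial k (w m) \<theta>) (at 0)" for m
    using smooth_on_line_derivative[OF assms(3) assms(2)] .
  have "cinner (w i (\<theta> + 0 *\<^sub>R axis k 1)) (partial k (w j) \<theta>)
      = - cnj (cinner (w j (\<theta> + 0 *\<^sub>R axis k 1)) (partial k (w i) \<theta>))"
    by (rule orthonormal_curve_derivative[where V="\<lambda>m t. w m (\<theta> + t *\<^sub>R axis k 1)", OF hw T ON_T])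
  then show ?thesis
    by simp
qed

lemma sld_equation_eigenbasis:
  assumes "open \<Theta>" "\<theta> \<in> \<Theta>" "\<And>m. smooth_on \<Theta> (p m)" "\<And>m. smooth_on \<Theta> (w m)"
    and ON: "\<And>\<theta>'. \<theta>' \<in> \<Theta> \<Longrightarrow> orthonormal_basis (\<lambda>m. w m \<theta>')"
    and SLD: "partial k (rho p w) \<theta> = (1/2) *\<^sub>R (rho p w \<theta> ** L + L ** rho p w \<theta>)"
  shows "of_real ((p i \<theta> + p j \<theta>) / 2) * cinner (w i \<theta>) (L *v w j \<theta>)
    = (if i = j then of_real (partial k (p i) \<theta>) else 0)
      + of_real (p j \<theta> - p i \<theta>) * cinner (w i \<theta>) (partial k (w j) \<theta>)"
proof -
  obtain T where T: "open T" "0 \<in> T"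
    and ON_T: "\<And>t. t \<in> T \<Longrightarrow> orthonormal_basis (\<lambda>m. w m (\<theta> + t *\<^sub>R axis k 1))"
    using orthonormal_along_line[where w=w and e="axis k 1", OF assms(1,2) ON] by auto
  have hp: "((\<lambda>t. p m (\<theta> + t *\<^sub>R axis k 1)) has_vector_derivative partial k (p m) \<theta>) (at 0)" for m
    using smooth_on_line_derivative[OF assms(3) assms(2)] .
  have hw: "((\<lambda>t. w m (\<theta> + t *\<^sub>R axis k 1)) has_vector_derivative partial k (w m) \<theta>) (at 0)" for m
    using smooth_on_line_derivative[OF assms(4) assms(2)] .
  have entries: "cinner (w i (\<theta> + 0 *\<^sub>R axis k 1))
        (vector_derivative (\<lambda>t. spectral_op (\<lambda>m. p m (\<theta> + t *\<^sub>R axis k 1))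
           (\<lambda>m. w m (\<theta> + t *\<^sub>R axis k 1))) (at 0) *v w j (\<theta> + 0 *\<^sub>R axis k 1))
      = (if i = j then of_real (partial k (p i) \<theta>) else 0)
        + of_real (p j (\<theta> + 0 *\<^sub>R axis k 1) - p i (\<theta> + 0 *\<^sub>R axis k 1))
          * cinner (w i (\<theta> + 0 *\<^sub>R axis k 1)) (partial k (w j) \<theta>)"
    by (rule spectral_op_derivative_entries[where P="\<lambda>m t. p m (\<theta> + t *\<^sub>R axis k 1)"
        and V="\<lambda>m t. w m (\<theta> + t *\<^sub>R axis k 1)", OF hp hw T ON_T])
  have "of_real ((p i \<theta> + p j \<theta>) / 2) * cinner (w i \<theta>) (L *v w j \<theta>)
      = cinner (w i \<theta>) (partial k (rho p w) \<theta> *v w j \<theta>)"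
    unfolding SLD rho_spectral_op
    by (rule cinner_symmetrised_product[OF ON[OF assms(2)], symmetric])
  also have "\<dots> = (if i = j then of_real (partial k (p i) \<theta>) else 0)
      + of_real (p j \<theta> - p i \<theta>) * cinner (w i \<theta>) (partial k (w j) \<theta>)"
    using entries by (simp add: partial_def rho_spectral_op)
  finally show ?thesis .
qed

lemma relation_linear_combination:
  fixes X Y :: "'k \<Rightarrow> complex"
  assumes "\<And>k. of_real c * X k = (if b then of_real (d k) else 0) + of_real e * Y k"
  shows "of_real c * (\<Sum>k\<in>K. of_real (v k) * X k)
    = (if b then of_real (\<Sum>k\<in>K. v k * d k) else 0) + of_real e * (\<Sum>k\<in>K. of_real (v k) * Y k)"
proof -
  have "of_real c * (\<Sum>k\<in>K. of_real (v k) * X k) = (\<Sum>k\<in>K. of_real (v k) * (of_real c * X k))"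
    by (simp add: sum_distrib_left mult_ac)
  also have "\<dots> = (\<Sum>k\<in>K. of_real (v k) * ((if b then of_real (d k) else 0) + of_real e * Y k))"
    by (simp only: assms)
  also have "\<dots> = (if b then of_real (\<Sum>k\<in>K. v k * d k) else 0) + of_real e * (\<Sum>k\<in>K. of_real (v k) * Y k)"
    by (simp add: sum.distrib sum_distrib_left algebra_simps)
  finally show ?thesis .
qed

section \<open>Quadratic forms\<close>

lemma quadratic_form_expand:
  fixes M :: "real^'p^'p"
  shows "v \<bullet> (M *v v) = (\<Sum>k\<in>UNIV. \<Sum>l\<in>UNIV. v $ k * v $ l * M $ k $ l)"
  by (simp add: inner_vec_def matrix_vector_mult_def sum_distrib_left algebra_simps)

lemma sum_swap_innermost:
  "(\<Sum>k\<in>K. \<Sum>l\<in>L. \<Sum>x\<in>S. f k l x) = (\<Sum>x\<in>S. \<Sum>k\<in>K. \<Sum>l\<in>L. f k l x)"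
  by (subst sum.swap) (intro sum.cong refl sum.swap)

lemma quadratic_form_real_sum:
  fixes v c :: "_ \<Rightarrow> real" and X :: "_ \<Rightarrow> _ \<Rightarrow> real"
  shows "(\<Sum>k\<in>K. \<Sum>l\<in>K. v k * v l * (\<Sum>x\<in>S. c x * X k x * X l x))
    = (\<Sum>x\<in>S. c x * (\<Sum>k\<in>K. v k * X k x)^2)"
proof -
  have "(\<Sum>k\<in>K. \<Sum>l\<in>K. v k * v l * (\<Sum>x\<in>S. c x * X k x * X l x))
     = (\<Sum>k\<in>K. \<Sum>l\<in>K. \<Sum>x\<in>S. c x * ((v k * X k x) * (v l * X l x)))"
    by (simp add: sum_distrib_left algebra_simps)
  also have "\<dots> = (\<Sum>x\<in>S. \<Sum>k\<in>K. \<Sum>l\<in>K. c x * ((v k * X k x) * (v l * X l x)))"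
    by (rule sum_swap_innermost)
  also have "\<dots> = (\<Sum>x\<in>S. c x * (\<Sum>k\<in>K. v k * X k x)^2)"
    by (simp add: power2_eq_square sum_distrib_left sum_distrib_right mult.assoc)
      (rule sum.cong[OF refl], rule sum.swap)
  finally show ?thesis .
qed

lemma quadratic_form_complex_sum:
  fixes v :: "_ \<Rightarrow> real" and g :: "_ \<Rightarrow> complex"
  shows "(\<Sum>k\<in>K. \<Sum>l\<in>K. v k * v l * Re (\<Sum>x\<in>S. g x * X k x * Y l x))
    = Re (\<Sum>x\<in>S. g x * (\<Sum>k\<in>K. of_real (v k) * X k x) * (\<Sum>l\<in>K. of_real (v l) * Y l x))"
proof -
  have "v k * v l * Re (\<Sum>x\<in>S. g x * X k x * Y l x)
      = Re (\<Sum>x\<in>S. g x * ((of_real (v k) * X k x) * (of_real (v l) * Y l x)))" for k l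
  proof -
    have "(\<Sum>x\<in>S. g x * ((of_real (v k) * X k x) * (of_real (v l) * Y l x)))
        = of_real (v k * v l) * (\<Sum>x\<in>S. g x * X k x * Y l x)"
      by (simp add: sum_distrib_left algebra_simps)
    then show ?thesis by simp
  qed
  then have "(\<Sum>k\<in>K. \<Sum>l\<in>K. v k * v l * Re (\<Sum>x\<in>S. g x * X k x * Y l x))
      = Re (\<Sum>k\<in>K. \<Sum>l\<in>K. \<Sum>x\<in>S. g x * ((of_real (v k) * X k x) * (of_real (v l) * Y l x)))"
    by (simp add: Re_sum)
  also have "\<dots> = Re (\<Sum>x\<in>S. \<Sum>k\<in>K. \<Sum>l\<in>K. g x * ((of_real (v k) * X k x) * (of_real (v l) * Y l x)))"
    by (rule arg_cong[where f=Re], rule sum_swap_innermost)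
  also have "\<dots> = Re (\<Sum>x\<in>S. g x * (\<Sum>k\<in>K. of_real (v k) * X k x) * (\<Sum>l\<in>K. of_real (v l) * Y l x))"
    by (rule arg_cong[where f=Re], intro sum.cong refl)
      (simp add: sum_distrib_left sum_distrib_right mult.assoc, rule sum.swap)
  finally show ?thesis .
qed

lemma quadratic_form_complex_double_sum:
  fixes v :: "_ \<Rightarrow> real" and g :: "_ \<Rightarrow> complex"
  shows "(\<Sum>k\<in>K. \<Sum>l\<in>K. v k * v l * Re (\<Sum>i\<in>I. \<Sum>j\<in>J. g i * (X k i j * Y l j i)))
    = Re (\<Sum>i\<in>I. \<Sum>j\<in>J. g i * ((\<Sum>k\<in>K. of_real (v k) * X k i j) * (\<Sum>l\<in>K. of_real (v l) * Y l j i)))"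
proof -
  have pairs: "(\<Sum>i\<in>I. \<Sum>j\<in>J. F i j) = (\<Sum>x\<in>I \<times> J. F (fst x) (snd x))" for F :: "_ \<Rightarrow> _ \<Rightarrow> complex"
    by (simp add: sum.cartesian_product split_def)
  show ?thesis
    unfolding pairs
    using quadratic_form_complex_sum[of v "\<lambda>x. g (fst x)" "\<lambda>k x. X k (fst x) (snd x)"
        "\<lambda>l x. Y l (snd x) (fst x)" "I \<times> J" K]
    by (simp add: mult.assoc)
qed

lemma H_SLD_quadratic_form:
  fixes w :: "'d::finite \<Rightarrow> real^'p \<Rightarrow> complex^'d" and lam :: "'p \<Rightarrow> complex^'d^'d"
    and \<theta> v :: "real^'p"
  assumes ON: "orthonormal_basis (\<lambda>m. w m \<theta>)"
  defines "L \<equiv> \<lambda>i j. \<Sum>k\<in>UNIV. of_real (v $ k) * cinner (w i \<theta>) (lam k *v w j \<theta>)"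
  shows "v \<bullet> (H_SLD p w lam \<theta> *v v) = Re (\<Sum>i\<in>UNIV. \<Sum>j\<in>UNIV. of_real (p i \<theta>) * (L i j * L j i))"
proof -
  have "v \<bullet> (H_SLD p w lam \<theta> *v v) = (\<Sum>k\<in>UNIV. \<Sum>l\<in>UNIV. v $ k * v $ l * Re (\<Sum>i\<in>UNIV. \<Sum>j\<in>UNIV.
      of_real (p i \<theta>) * (cinner (w i \<theta>) (lam k *v w j \<theta>) * cinner (w j \<theta>) (lam l *v w i \<theta>))))"
    unfolding quadratic_form_expand H_SLD_def rho_spectral_op ctrace_spectral_op_product[OF ON]
    by simp
  also have "\<dots> = Re (\<Sum>i\<in>UNIV. \<Sum>j\<in>UNIV. of_real (p i \<theta>) * (L i j * L j i))"
    unfolding quadratic_form_complex_double_sum L_def ..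
  finally show ?thesis .
qed

lemma C_L_quadratic_form:
  fixes p :: "'d::{finite,linorder} \<Rightarrow> real^'p \<Rightarrow> real" and w :: "'d \<Rightarrow> real^'p \<Rightarrow> complex^'d::{finite,linorder}"
    and \<theta> v :: "real^'p"
  defines "D \<equiv> \<lambda>i. \<Sum>k\<in>UNIV. v $ k * partial k (p i) \<theta>"
    and "A \<equiv> \<lambda>i j. \<Sum>k\<in>UNIV. of_real (v $ k) * cinner (w i \<theta>) (partial k (w j) \<theta>)"
  shows "v \<bullet> (C_L p w \<theta> *v v) = (\<Sum>i\<in>{i. p i \<theta> \<noteq> 0}. D i ^ 2 / p i \<theta>)
    + 4 * Re (\<Sum>(i, j)\<in>{(i, j). i < j}. of_real (p i \<theta> + p j \<theta>) * cnj (A j i) * A j i)"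
proof -
  define S :: "('d \<times> 'd) set" where "S = {(i, j). i < j}"
  have classical: "(\<Sum>k\<in>UNIV. \<Sum>l\<in>UNIV. v $ k * v $ l *
        (\<Sum>i\<in>{i. p i \<theta> \<noteq> 0}. 1 / p i \<theta> * partial k (p i) \<theta> * partial l (p i) \<theta>))
      = (\<Sum>i\<in>{i. p i \<theta> \<noteq> 0}. D i ^ 2 / p i \<theta>)"
    unfolding quadratic_form_real_sum D_def by simp
  have cnj_A: "cnj (A j i) = (\<Sum>k\<in>UNIV. of_real (v $ k) * cinner (partial k (w i) \<theta>) (w j \<theta>))" for i j
    by (simp add: A_def cinner_swap[of "partial _ (w i) \<theta>"])
  have quantum: "(\<Sum>k\<in>UNIV. \<Sum>l\<in>UNIV. v $ k * v $ l * Re (\<Sum>x\<in>S. of_real (p (fst x) \<theta> + p (snd x) \<theta>)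
        * cinner (partial k (w (fst x)) \<theta>) (w (snd x) \<theta>) * cinner (w (snd x) \<theta>) (partial l (w (fst x)) \<theta>)))
      = Re (\<Sum>x\<in>S. of_real (p (fst x) \<theta> + p (snd x) \<theta>) * cnj (A (snd x) (fst x)) * A (snd x) (fst x))"
    unfolding quadratic_form_complex_sum cnj_A by (simp add: A_def)
  have "v \<bullet> (C_L p w \<theta> *v v)
      = (\<Sum>k\<in>UNIV. \<Sum>l\<in>UNIV. v $ k * v $ l *
          (\<Sum>i\<in>{i. p i \<theta> \<noteq> 0}. 1 / p i \<theta> * partial k (p i) \<theta> * partial l (p i) \<theta>))
      + 4 * (\<Sum>k\<in>UNIV. \<Sum>l\<in>UNIV. v $ k * v $ l * Re (\<Sum>x\<in>S. of_real (p (fst x) \<theta> + p (snd x) \<theta>)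
          * cinner (partial k (w (fst x)) \<theta>) (w (snd x) \<theta>) * cinner (w (snd x) \<theta>) (partial l (w (fst x)) \<theta>)))"
    unfolding quadratic_form_expand C_L_def
    by (simp add: S_def case_prod_unfold sum.distrib sum_distrib_left algebra_simps)
  then show ?thesis
    unfolding classical quantum by (simp add: S_def case_prod_unfold)
qed

section \<open>The scalar inequality\<close>

lemma diagonal_term:
  fixes q D :: real and l :: complex
  assumes "q \<ge> 0" "of_real q * l = of_real D"
  shows "q * (cmod l)^2 = (if q \<noteq> 0 then D^2 / q else 0)"
proof -
  have "q * cmod l = \<bar>D\<bar>"
    by (metis assms abs_of_nonneg norm_mult norm_of_real)
  then have "(q * cmod l)^2 = D^2"
    by simp
  then show ?thesis
    by (simp add: power2_eq_square field_simps)
qed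
text \<open>Off-diagonal terms: from (q_i + q_j)/2 L = (q_j - q_i) A and |q_j - q_i| <= q_i + q_j
  we get |L| <= 2|A|, hence (q_i + q_j)/2 |L|^2 <= 2 (q_i + q_j) |A|^2.\<close>
lemma off_diagonal_term:
  fixes qi qj :: real and l a :: complex
  assumes "qi \<ge> 0" "qj \<ge> 0" "of_real ((qi + qj) / 2) * l = of_real (qj - qi) * a"
  shows "(qi + qj) / 2 * (cmod l)^2 \<le> 2 * (qi + qj) * (cmod a)^2"
proof (cases "qi + qj = 0")
  case True
  then show ?thesis by simp
next
  case False
  with assms(1,2) have s: "qi + qj > 0" by simp
  have "cmod (of_real ((qi + qj) / 2) * l) = cmod (of_real (qj - qi) * a)"
    using assms(3) by simp
  then have "\<bar>(qi + qj) / 2\<bar> * cmod l = \<bar>qj - qi\<bar> * cmod a"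
    by (simp only: norm_mult norm_of_real)
  then have "(qi + qj) / 2 * cmod l = \<bar>qj - qi\<bar> * cmod a"
    using s by simp
  also have "\<dots> \<le> (qi + qj) * cmod a"
    using assms(1,2) by (intro mult_right_mono) auto
  finally have "(qi + qj) * cmod l \<le> (qi + qj) * (2 * cmod a)"
    by (simp add: algebra_simps)
  then have "cmod l \<le> 2 * cmod a"
    using s by (rule mult_left_le_imp_le)
  then have "(cmod l)^2 \<le> (2 * cmod a)^2"
    by (intro power_mono) auto
  then have "(qi + qj) / 2 * (cmod l)^2 \<le> (qi + qj) / 2 * (2 * cmod a)^2"
    using s by (intro mult_left_mono) auto
  then show ?thesis
    by (simp add: power_mult_distrib algebra_simps)
qed

lemma hermitian_form_symmetrised:
  fixes q :: "'d::finite \<Rightarrow> real" and L :: "'d \<Rightarrow> 'd \<Rightarrow> complex"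
  assumes Lh: "\<And>i j. L j i = cnj (L i j)"
  shows "Re (\<Sum>i\<in>UNIV. \<Sum>j\<in>UNIV. of_real (q i) * (L i j * L j i))
    = (\<Sum>i\<in>UNIV. \<Sum>j\<in>UNIV. (q i + q j) / 2 * (cmod (L i j))^2)"
proof -
  have sym: "cmod (L i j) = cmod (L j i)" for i j
  proof -
    have "L j i = cnj (L i j)" by (rule Lh)
    then show ?thesis by simp
  qed
  have "of_real (q i) * (L i j * L j i) = complex_of_real (q i * (cmod (L i j))^2)" for i j
  proof -
    have "L j i = cnj (L i j)" by (rule Lh)
    then show ?thesis
      using complex_norm_square[of "L i j"] by simp
  qed
  then have "Re (\<Sum>i\<in>UNIV. \<Sum>j\<in>UNIV. of_real (q i) * (L i j * L j i))
      = (\<Sum>i\<in>UNIV. \<Sum>j\<in>UNIV. q i * (cmod (L i j))^2)"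
    by (simp only: Re_sum Re_complex_of_real)
  also have "\<dots> = (\<Sum>i\<in>UNIV. \<Sum>j\<in>UNIV. (q i + q j) / 2 * (cmod (L i j))^2)"
  proof -
    have "(\<Sum>i\<in>UNIV. \<Sum>j\<in>UNIV. q j * (cmod (L i j))^2) = (\<Sum>j\<in>UNIV. \<Sum>i\<in>UNIV. q j * (cmod (L j i))^2)"
      by (subst sum.swap) (simp only: sym)
    then show ?thesis
      by (simp add: sum.distrib add_divide_distrib distrib_right sum_divide_distrib[symmetric])
  qed
  finally show ?thesis .
qed

lemma off_diagonal_sum:
  fixes h :: "'d::{finite,linorder} \<Rightarrow> 'd \<Rightarrow> real"
  assumes sym: "\<And>i j. h i j = h j i"
  shows "(\<Sum>i\<in>UNIV. \<Sum>j\<in>UNIV. if i = j then 0 else h i j) = 2 * (\<Sum>(i, j)\<in>{(i, j). i < j}. h i j)"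
proof -
  have "(\<Sum>(i, j)\<in>{(i, j). i < j}. h i j)
      = (\<Sum>x\<in>UNIV. if x \<in> {(i, j). i < j} then (case x of (i, j) \<Rightarrow> h i j) else 0)"
    using sum.inter_restrict[of UNIV "\<lambda>(i, j). h i j" "{(i, j). i < j}"] by simp
  also have "\<dots> = (\<Sum>(i, j)\<in>UNIV \<times> UNIV. if i < j then h i j else 0)"
    by (intro sum.cong) auto
  finally have pairs: "(\<Sum>(i, j)\<in>{(i, j). i < j}. h i j) = (\<Sum>i\<in>UNIV. \<Sum>j\<in>UNIV. if i < j then h i j else 0)"
    by (simp add: sum.cartesian_product)
  have "(\<Sum>i\<in>UNIV. \<Sum>j\<in>UNIV. if i = j then 0 else h i j)
      = (\<Sum>i\<in>UNIV. \<Sum>j\<in>UNIV. if i < j then h i j else 0) + (\<Sum>i\<in>UNIV. \<Sum>j\<in>UNIV. if j < i then h i j else 0)"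
    unfolding sum.distrib[symmetric] by (intro sum.cong refl) (auto simp: not_less_iff_gr_or_eq)
  also have "(\<Sum>i\<in>UNIV. \<Sum>j\<in>UNIV. if j < i then h i j else 0) = (\<Sum>j\<in>UNIV. \<Sum>i\<in>UNIV. if j < i then h i j else 0)"
    by (rule sum.swap)
  also have "\<dots> = (\<Sum>i\<in>UNIV. \<Sum>j\<in>UNIV. if i < j then h i j else 0)"
    using sym by (intro sum.cong refl) auto
  finally show ?thesis
    by (simp add: pairs)
qed

lemma sld_scalar_inequality:
  fixes q :: "'d::{finite,linorder} \<Rightarrow> real" and L A :: "'d \<Rightarrow> 'd \<Rightarrow> complex" and D :: "'d \<Rightarrow> real"
  assumes pos: "\<And>i. q i \<ge> 0"
    and Lh: "\<And>i j. L j i = cnj (L i j)"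
    and Ah: "\<And>i j. A i j = - cnj (A j i)"
    and rel: "\<And>i j. of_real ((q i + q j) / 2) * L i j
      = (if i = j then of_real (D i) else 0) + of_real (q j - q i) * A i j"
  shows "Re (\<Sum>i\<in>UNIV. \<Sum>j\<in>UNIV. of_real (q i) * (L i j * L j i))
    \<le> (\<Sum>i\<in>{i. q i \<noteq> 0}. D i ^ 2 / q i)
      + 4 * Re (\<Sum>(i, j)\<in>{(i, j). i < j}. of_real (q i + q j) * cnj (A j i) * A j i)"
proof -
  define diag where "diag i = (if q i \<noteq> 0 then D i ^ 2 / q i else 0)" for i
  define off where "off i j = 2 * (q i + q j) * (cmod (A i j))^2" for i j
  have bound: "(q i + q j) / 2 * (cmod (L i j))^2
      \<le> (if i = j then diag i else 0) + (if i = j then 0 else off i j)" for i j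
  proof (cases "i = j")
    case True
    then have "of_real (q i) * L i i = of_real (D i)"
      using rel[of i i] by simp
    then show ?thesis
      using True diagonal_term[OF pos] by (simp add: diag_def)
  next
    case False
    then have "of_real ((q i + q j) / 2) * L i j = of_real (q j - q i) * A i j"
      using rel[of i j] by simp
    then show ?thesis
      using False off_diagonal_term[OF pos pos] by (simp add: off_def)
  qed
  have A_sym: "cmod (A i j) = cmod (A j i)" for i j
  proof -
    have "A i j = - cnj (A j i)" by (rule Ah)
    then show ?thesis by simp
  qed
  have off_sym: "off i j = off j i" for i j
    by (simp add: off_def A_sym[of i j] add.commute)
  have off_Re: "(q i + q j) * (cmod (A i j))^2 = Re (of_real (q i + q j) * cnj (A j i) * A j i)" for i j
  proof -
    have "cnj (A j i) * A j i = of_real ((cmod (A j i))^2)"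
      using complex_norm_square[of "A j i"] by (simp add: mult.commute)
    then have "Re (of_real (q i + q j) * cnj (A j i) * A j i) = Re (of_real (q i + q j) * of_real ((cmod (A j i))^2))"
      by (simp only: mult.assoc)
    then show ?thesis
      by (simp add: A_sym[of i j])
  qed
  have off_sum: "Re (\<Sum>(i, j)\<in>{(i, j). i < j}. of_real (q i + q j) * cnj (A j i) * A j i)
      = (\<Sum>(i, j)\<in>{(i, j). i < j}. (q i + q j) * (cmod (A i j))^2)"
    unfolding Re_sum by (intro sum.cong refl) (clarsimp simp only: off_Re)
  have "Re (\<Sum>i\<in>UNIV. \<Sum>j\<in>UNIV. of_real (q i) * (L i j * L j i))
      = (\<Sum>i\<in>UNIV. \<Sum>j\<in>UNIV. (q i + q j) / 2 * (cmod (L i j))^2)"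
    by (rule hermitian_form_symmetrised[OF Lh])
  also have "\<dots> \<le> (\<Sum>i\<in>UNIV. \<Sum>j\<in>UNIV. (if i = j then diag i else 0) + (if i = j then 0 else off i j))"
    by (intro sum_mono bound)
  also have "\<dots> = (\<Sum>i\<in>UNIV. diag i) + 2 * (\<Sum>(i, j)\<in>{(i, j). i < j}. off i j)"
    by (simp add: sum.distrib off_diagonal_sum[OF off_sym])
  also have "\<dots> = (\<Sum>i\<in>{i. q i \<noteq> 0}. D i ^ 2 / q i)
      + 4 * Re (\<Sum>(i, j)\<in>{(i, j). i < j}. of_real (q i + q j) * cnj (A j i) * A j i)"
    unfolding off_sum by (simp add: diag_def sum.If_cases off_def case_prod_beta sum_distrib_left
        algebra_simps)
  finally show ?thesis .
qed

theorem lemma6: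
  fixes \<Theta> :: "(real^'p) set"
    and p :: "'d::{finite,linorder} \<Rightarrow> real^'p \<Rightarrow> real"
    and w :: "'d::{finite,linorder} \<Rightarrow> real^'p \<Rightarrow> complex^'d::{finite,linorder}"
    and lam :: "'p \<Rightarrow> complex^'d::{finite,linorder}^'d::{finite,linorder}"
    and \<theta> v :: "real^'p"
  assumes "open \<Theta>"
    and "\<And>k. smooth_on \<Theta> (p k)"
    and "\<And>k \<theta>. \<theta> \<in> \<Theta> \<Longrightarrow> 0 \<le> p k \<theta> \<and> p k \<theta> \<le> 1"
    and "\<And>\<theta>. \<theta> \<in> \<Theta> \<Longrightarrow> (\<Sum>k\<in>UNIV. p k \<theta>) = 1"
    and "\<And>k. smooth_on \<Theta> (w k)"
    and "\<And>i j \<theta>. \<theta> \<in> \<Theta> \<Longrightarrow> cinner (w i \<theta>) (w j \<theta>) = (if i = j then 1 else 0)"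
    and "\<theta> \<in> \<Theta>"
    and "\<And>k. hermitian (lam k)"
    and "\<And>k. partial k (rho p w) \<theta> = (1/2) *\<^sub>R (rho p w \<theta> ** lam k + lam k ** rho p w \<theta>)"
  shows "v \<bullet> (H_SLD p w lam \<theta> *v v) \<le> v \<bullet> (C_L p w \<theta> *v v)"
proof -
  have ON: "\<And>\<theta>'. \<theta>' \<in> \<Theta> \<Longrightarrow> orthonormal_basis (\<lambda>m. w m \<theta>')"
    using assms(6) by (simp add: orthonormal_basis_def)
  define L where "L i j = (\<Sum>k\<in>UNIV. of_real (v $ k) * cinner (w i \<theta>) (lam k *v w j \<theta>))" for i j
  define A where "A i j = (\<Sum>k\<in>UNIV. of_real (v $ k) * cinner (w i \<theta>) (partial k (w j) \<theta>))" for i j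
  define D where "D i = (\<Sum>k\<in>UNIV. v $ k * partial k (p i) \<theta>)" for i
  have rel: "of_real ((p i \<theta> + p j \<theta>) / 2) * L i j
      = (if i = j then of_real (D i) else 0) + of_real (p j \<theta> - p i \<theta>) * A i j" for i j
    unfolding L_def A_def D_def
    by (rule relation_linear_combination, rule sld_equation_eigenbasis[OF assms(1,7,2,5) ON assms(9)])
  have L_hermitian: "L j i = cnj (L i j)" for i j
    by (simp add: L_def cinner_hermitian_conj[OF assms(8), of "w j \<theta>"])
  have A_antihermitian: "A i j = - cnj (A j i)" for i j
    using partial_eigenbasis_antihermitian[OF assms(1,7,5) ON, where i=i and j=j]
    by (simp add: A_def sum_negf)
  have pos: "p i \<theta> \<ge> 0" for i
    using assms(3)[OF assms(7)] by simp
  have "v \<bullet> (H_SLD p w lam \<theta> *v v) = Re (\<Sum>i\<in>UNIV. \<Sum>j\<in>UNIV. of_real (p i \<theta>) * (L i j * L j i))"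
    unfolding L_def by (rule H_SLD_quadratic_form[where w=w and \<theta>=\<theta>, OF ON[OF assms(7)]])
  also have "\<dots> \<le> (\<Sum>i\<in>{i. p i \<theta> \<noteq> 0}. D i ^ 2 / p i \<theta>)
      + 4 * Re (\<Sum>(i, j)\<in>{(i, j). i < j}. of_real (p i \<theta> + p j \<theta>) * cnj (A j i) * A j i)"
    by (rule sld_scalar_inequality[OF pos L_hermitian A_antihermitian rel])
  also have "\<dots> = v \<bullet> (C_L p w \<theta> *v v)"
    unfolding A_def D_def by (rule C_L_quadratic_form[symmetric])
  finally show ?thesis .
qed

end
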